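(* Let $m\ge1$ and let $W_m(t,x)=\sum_{w} t^{\mathrm{da}(w)}x^{\ell(w)}$, the sum running over all finite words $w$ (including the empty word) over the alphabet $\{1,2,\dots,m\}$, where $\ell(w)$ is the length of $w$. Then $$W_m(t,x)=\frac{1+mx}{1-mx^2-m(m-1)tx^2}.$$
   Context: For a word $w=a_1a_2\cdots a_\ell$, the degree of asymmetry is $\mathrm{da}(w)=|\{i: 1\le i\le \ell/2,\ a_i\neq a_{\ell+1-i}\}|$. *)

theory Defs
  imports "HOL-Computational_Algebra.Formal_Power_Series"
begin

text \<open>Degree of asymmetry of a word w = a_1 ... a_l (a list; position i corresponds to w ! (i-1)):
  the number of i with 1 <= i <= l/2 and a_i ~= a_(l+1-i).\<close>
definition da :: "'b list \<Rightarrow> nat" where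
  "da w = card {i::nat. 1 \<le> i \<and> 2 * i \<le> length w \<and> w ! (i - 1) \<noteq> w ! (length w - i)}"

definition words :: "nat \<Rightarrow> nat \<Rightarrow> nat list set" where
  "words m n = {w. set w \<subseteq> {1..m} \<and> length w = n}"

text \<open>W_m(t,x) as a formal power series in x, with t an element of the coefficient field:
  coefficient of x^n is the sum over words of length n of t^da(w).\<close>
definition W :: "nat \<Rightarrow> 'a::field \<Rightarrow> 'a fps" where
  "W m t = Abs_fps (\<lambda>n. \<Sum>w\<in>words m n. t ^ da w)"

end

theory Submission
  imports Defs
begin

text \<open>Peeling off the first and the last letter a, b of a word of length n + 2 leaves a word
  of length n whose mirror pairs are the remaining ones, so the degree of asymmetry drops by 1
  exactly when a \<noteq> b. Hence the coefficient of x^(n+2) in W_m is m (1 + (m - 1) t) times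
  that of x^n, while the coefficients of x^0 and x^1 are 1 and m. A power series with such a
  two-step recurrence is a rational function with denominator 1 - m (1 + (m - 1) t) x^2.\<close>

lemma fps_eq_divide_of_two_step_recurrence:
  fixes f :: "'a::field fps"
  assumes rec: "\<And>n. fps_nth f (Suc (Suc n)) = k * fps_nth f n"
  shows "f = (fps_const (fps_nth f 0) + fps_const (fps_nth f 1) * fps_X)
             / (1 - fps_const k * fps_X ^ 2)"
proof -
  have "fps_nth (f - fps_const k * (f * fps_X ^ 2)) n
      = fps_nth (fps_const (fps_nth f 0) + fps_const (fps_nth f 1) * fps_X) n" for n
  proof (cases n)
    case (Suc j)
    then show ?thesis
      using rec by (cases j) (auto simp: fps_X_power_mult_right_nth)
  qed (simp add: fps_X_power_mult_right_nth)
  then have "f * (1 - fps_const k * fps_X ^ 2)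
      = fps_const (fps_nth f 0) + fps_const (fps_nth f 1) * fps_X"
    by (intro fps_ext) (simp add: right_diff_distrib mult.left_commute)
  moreover have "1 - fps_const k * fps_X ^ 2 \<noteq> (0 :: 'a fps)"
  proof
    assume "1 - fps_const k * fps_X ^ 2 = 0"
    then have "fps_nth (1 - fps_const k * fps_X ^ 2) 0 = 0" by simp
    then show False by simp
  qed
  ultimately show ?thesis
    by (metis nonzero_mult_div_cancel_right)
qed

definition asymmetric_positions :: "'b list \<Rightarrow> nat set" where
  "asymmetric_positions w =
     {i. 1 \<le> i \<and> 2 * i \<le> length w \<and> w ! (i - 1) \<noteq> w ! (length w - i)}"

lemma da_eq_card_asymmetric_positions: "da w = card (asymmetric_positions w)"
  by (simp add: da_def asymmetric_positions_def)

lemma finite_asymmetric_positions: "finite (asymmetric_positions w)"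
  unfolding asymmetric_positions_def by (rule finite_subset[of _ "{..length w}"]) auto

lemma asymmetric_positions_length_le_1:
  "length w \<le> 1 \<Longrightarrow> asymmetric_positions w = {}"
  by (auto simp: asymmetric_positions_def)

lemma Suc_in_asymmetric_positions_Cons_snoc_iff:
  assumes "1 \<le> j"
  shows "Suc j \<in> asymmetric_positions (a # v @ [b]) \<longleftrightarrow> j \<in> asymmetric_positions v"
proof (cases "2 * j \<le> length v")
  case True
  then have "length v + 2 - Suc j = Suc (length v - j)"
    and "length v - j < length v" and "j - 1 < length v"
    using assms by auto
  with True assms show ?thesis
    by (cases j) (auto simp: asymmetric_positions_def nth_append)
qed (auto simp: asymmetric_positions_def)

lemma asymmetric_positions_Cons_snoc:
  "asymmetric_positions (a # v @ [b])
     = (if a = b then {} else {1}) \<union> Suc ` asymmetric_positions v"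
proof (intro set_eqI)
  fix i
  show "i \<in> asymmetric_positions (a # v @ [b])
      \<longleftrightarrow> i \<in> (if a = b then {} else {1}) \<union> Suc ` asymmetric_positions v"
  proof (cases i)
    case (Suc j)
    then show ?thesis
      using Suc_in_asymmetric_positions_Cons_snoc_iff[of j a v b]
      by (cases "j = 0") (auto simp: asymmetric_positions_def nth_append)
  qed (auto simp: asymmetric_positions_def)
qed

lemma da_length_le_1: "length w \<le> 1 \<Longrightarrow> da w = 0"
  by (simp add: da_eq_card_asymmetric_positions asymmetric_positions_length_le_1)

lemma da_Cons_snoc: "da (a # v @ [b]) = da v + (if a = b then 0 else 1)"
proof -
  have "0 \<notin> asymmetric_positions v"
    by (simp add: asymmetric_positions_def)
  then show ?thesis
    unfolding da_eq_card_asymmetric_positions asymmetric_positions_Cons_snoc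
    by (subst card_Un_disjoint) (auto simp: card_image finite_asymmetric_positions)
qed

lemma words_0: "words m 0 = {[]}"
  by (auto simp: words_def)

lemma words_Suc_0: "words m (Suc 0) = (\<lambda>a. [a]) ` {1..m}"
  by (auto simp: words_def length_Suc_conv)

lemma words_Suc_Suc:
  "words m (Suc (Suc n)) = (\<lambda>(a, v, b). a # v @ [b]) ` ({1..m} \<times> words m n \<times> {1..m})"
proof (intro set_eqI iffI)
  fix w
  assume w: "w \<in> words m (Suc (Suc n))"
  then obtain a u where "w = a # u" "length u = Suc n"
    by (cases w) (auto simp: words_def)
  moreover from \<open>length u = Suc n\<close> obtain v b where "u = v @ [b]"
    by (auto simp: length_Suc_conv_rev)
  ultimately show "w \<in> (\<lambda>(a, v, b). a # v @ [b]) ` ({1..m} \<times> words m n \<times> {1..m})"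
    using w by (auto simp: words_def intro!: image_eqI[where x = "(a, v, b)"])
qed (auto simp: words_def)

lemma inj_on_Cons_snoc: "inj_on (\<lambda>(a, v, b). a # v @ [b]) A"
  by (auto simp: inj_on_def)

lemma sum_power_if_neq:
  fixes t :: "'a::comm_ring_1"
  assumes "finite A" "a \<in> A"
  shows "(\<Sum>b\<in>A. t ^ (if a = b then 0 else 1)) = 1 + (of_nat (card A) - 1) * t"
proof -
  have "(\<Sum>b\<in>A. t ^ (if a = b then 0 else 1))
      = 1 + (\<Sum>b\<in>A - {a}. t ^ (if a = b then 0 else 1))"
    using assms by (simp add: sum.remove)
  also have "(\<Sum>b\<in>A - {a}. t ^ (if a = b then 0 else 1)) = of_nat (card (A - {a})) * t"
    by (subst sum.cong[OF refl, of _ _ "\<lambda>_. t"]) auto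
  also have "card A \<ge> 1"
    using assms by (auto simp: Suc_le_eq card_gt_0_iff)
  then have "of_nat (card (A - {a})) = (of_nat (card A) - 1 :: 'a)"
    using assms by simp
  finally show ?thesis .
qed

lemma fps_nth_W: "fps_nth (W m t) n = (\<Sum>w\<in>words m n. t ^ da w)"
  by (simp add: W_def)

lemma W_nth_0: "fps_nth (W m t) 0 = 1"
  by (simp add: fps_nth_W words_0 da_length_le_1)

lemma W_nth_1: "fps_nth (W m t) 1 = of_nat m"
  by (simp add: fps_nth_W words_Suc_0 da_length_le_1 sum.reindex inj_on_def)

lemma W_nth_Suc_Suc:
  "fps_nth (W m t) (Suc (Suc n)) = of_nat m * (1 + (of_nat m - 1) * t) * fps_nth (W m t) n"
proof -
  have "fps_nth (W m t) (Suc (Suc n))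
      = (\<Sum>(a, v, b)\<in>{1..m} \<times> words m n \<times> {1..m}. t ^ da (a # v @ [b]))"
    unfolding fps_nth_W words_Suc_Suc
    by (subst sum.reindex[OF inj_on_Cons_snoc]) (simp add: o_def split_beta)
  also have "\<dots> = (\<Sum>a\<in>{1..m}. \<Sum>v\<in>words m n. \<Sum>b\<in>{1..m}.
                       t ^ da v * t ^ (if a = b then 0 else 1))"
    by (simp add: sum.cartesian_product split_beta da_Cons_snoc power_add)
  also have "\<dots> = (\<Sum>a\<in>{1..m}. \<Sum>v\<in>words m n. t ^ da v * (1 + (of_nat m - 1) * t))"
    by (simp add: sum_distrib_left[symmetric] sum_power_if_neq)
  also have "\<dots> = of_nat m * (1 + (of_nat m - 1) * t) * fps_nth (W m t) n"
    by (simp add: fps_nth_W sum_distrib_right[symmetric] mult_ac)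
  finally show ?thesis .
qed

theorem corollary2p4:
  fixes m :: nat and t :: "'a::field"
  assumes "m \<ge> 1"
  shows "W m t = (1 + fps_const (of_nat m) * fps_X) /
                 (1 - fps_const (of_nat m) * fps_X ^ 2
                    - fps_const (of_nat m * (of_nat m - 1) * t) * fps_X ^ 2)"
proof -
  define k :: 'a where "k = of_nat m * (1 + (of_nat m - 1) * t)"
  have "W m t = (1 + fps_const (of_nat m) * fps_X) / (1 - fps_const k * fps_X ^ 2)"
    using fps_eq_divide_of_two_step_recurrence[OF W_nth_Suc_Suc]
    unfolding W_nth_0 W_nth_1 k_def by simp
  also have "fps_const k = fps_const (of_nat m) + fps_const (of_nat m * (of_nat m - 1) * t)"
    unfolding k_def fps_const_add[symmetric] by (simp add: algebra_simps)
  finally show ?thesis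
    by (simp only: distrib_right diff_diff_eq)
qed

end
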